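(* Let $R$ be a commutative ring with identity. If $R$ is semi-complemented, then $R$ is almost complemented.
   Context: $\mathfrak{N}(R)$ is the nilradical and $\mathrm{reg}(R)$ the set of regular elements (non-zero-divisors). An element $a$ is complemented if there is $b$ with $ab=0$ and $a+b\in\mathrm{reg}(R)$; a ring is complemented if all its elements are. $R$ is semi-complemented if every element of $R\setminus\mathfrak{N}(R)$ is complemented. $R$ is almost complemented if $R/\mathfrak{N}(R)$ is a complemented ring. *)

theory Defs
  imports "HOL-Algebra.QuotRing"
begin

definition nilradical :: "('a, 'b) ring_scheme \<Rightarrow> 'a set" where
  "nilradical R = {a \<in> carrier R. \<exists>n::nat. a [^]\<^bsub>R\<^esub> n = \<zero>\<^bsub>R\<^esub>}"

text \<open>Regular elements (non-zero-divisors), for commutative rings.\<close>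
definition regular_elems :: "('a, 'b) ring_scheme \<Rightarrow> 'a set" where
  "regular_elems R = {a \<in> carrier R. \<forall>b \<in> carrier R. a \<otimes>\<^bsub>R\<^esub> b = \<zero>\<^bsub>R\<^esub> \<longrightarrow> b = \<zero>\<^bsub>R\<^esub>}"

definition complemented_elem :: "('a, 'b) ring_scheme \<Rightarrow> 'a \<Rightarrow> bool" where
  "complemented_elem R a \<longleftrightarrow>
     (\<exists>b \<in> carrier R. a \<otimes>\<^bsub>R\<^esub> b = \<zero>\<^bsub>R\<^esub> \<and> a \<oplus>\<^bsub>R\<^esub> b \<in> regular_elems R)"

definition complemented_ring :: "('a, 'b) ring_scheme \<Rightarrow> bool" where
  "complemented_ring R \<longleftrightarrow> (\<forall>a \<in> carrier R. complemented_elem R a)"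

definition semi_complemented :: "('a, 'b) ring_scheme \<Rightarrow> bool" where
  "semi_complemented R \<longleftrightarrow> (\<forall>a \<in> carrier R - nilradical R. complemented_elem R a)"

definition almost_complemented :: "('a, 'b) ring_scheme \<Rightarrow> bool" where
  "almost_complemented R \<longleftrightarrow> complemented_ring (R Quot (nilradical R))"

end

theory Submission
  imports Defs
begin

(* If a is not nilpotent, pick b with ab = 0 and a + b regular. The class of a + b
   in R/N(R) is still regular: if (a + b) c is nilpotent, then
   ((a + b) c)^n = (a + b)^n c^n = 0 with (a + b)^n regular, so c^n = 0.
   Hence b + N(R) complements a + N(R); the remaining class, that of the nilpotent
   elements, is zero and is complemented by 1. *)

lemma (in cring) power_of_sum_split:
  fixes i j :: nat
  assumes x: "x \<in> carrier R" and y: "y \<in> carrier R"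
  shows "\<exists>r\<in>carrier R. \<exists>s\<in>carrier R. (x \<oplus> y) [^] (i + j) = x [^] i \<otimes> r \<oplus> y [^] j \<otimes> s"
proof (induction "i + j" arbitrary: i j)
  case 0
  then show ?case using x y by (intro bexI[of _ \<one>] bexI[of _ \<zero>]) auto
next
  case (Suc k)
  consider "i = 0" | "j = 0" | i' j' where "i = Suc i'" "j = Suc j'"
    by (meson not0_implies_Suc)
  then show ?case
  proof cases
    case 1
    then show ?thesis using x y by (intro bexI[of _ "(x \<oplus> y) [^] j"] bexI[of _ \<zero>]) auto
  next
    case 2
    then show ?thesis using x y by (intro bexI[of _ \<zero>] bexI[of _ "(x \<oplus> y) [^] i"]) auto
  next
    case 3
    obtain r1 s1 where r1: "r1 \<in> carrier R" and s1: "s1 \<in> carrier R"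
      and e1: "(x \<oplus> y) [^] (i' + j) = x [^] i' \<otimes> r1 \<oplus> y [^] j \<otimes> s1"
      using Suc.hyps(1)[of i' j] Suc.hyps(2) 3 by auto
    obtain r2 s2 where r2: "r2 \<in> carrier R" and s2: "s2 \<in> carrier R"
      and e2: "(x \<oplus> y) [^] (i + j') = x [^] i \<otimes> r2 \<oplus> y [^] j' \<otimes> s2"
      using Suc.hyps(1)[of i j'] Suc.hyps(2) 3 by auto
    have "(x \<oplus> y) [^] (i + j) = (x \<oplus> y) [^] (i' + j) \<otimes> x \<oplus> (x \<oplus> y) [^] (i + j') \<otimes> y"
      using x y 3 by (simp add: r_distr)
    also have "\<dots> = (x [^] i' \<otimes> r1 \<oplus> (y [^] j' \<otimes> y) \<otimes> s1) \<otimes> x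
                   \<oplus> ((x [^] i' \<otimes> x) \<otimes> r2 \<oplus> y [^] j' \<otimes> s2) \<otimes> y"
      using e1 e2 3 by simp
    also have "\<dots> = (x [^] i' \<otimes> x) \<otimes> (r1 \<oplus> r2 \<otimes> y) \<oplus> (y [^] j' \<otimes> y) \<otimes> (s1 \<otimes> x \<oplus> s2)"
      using x y r1 r2 s1 s2 nat_pow_closed[OF x, of i'] nat_pow_closed[OF y, of j'] by algebra
    also have "\<dots> = x [^] i \<otimes> (r1 \<oplus> r2 \<otimes> y) \<oplus> y [^] j \<otimes> (s1 \<otimes> x \<oplus> s2)"
      using 3 by simp
    finally show ?thesis using x y r1 r2 s1 s2 by blast
  qed
qed

lemma (in cring) nilpotent_add:
  fixes m n :: nat
  assumes x: "x \<in> carrier R" and y: "y \<in> carrier R"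
    and "x [^] m = \<zero>" and "y [^] n = \<zero>"
  shows "(x \<oplus> y) [^] (m + n) = \<zero>"
proof -
  obtain r s where "r \<in> carrier R" "s \<in> carrier R"
    and "(x \<oplus> y) [^] (m + n) = x [^] m \<otimes> r \<oplus> y [^] n \<otimes> s"
    using power_of_sum_split[OF x y] by blast
  with assms show ?thesis by simp
qed

lemma (in cring) nilradical_ideal: "ideal (nilradical R) R"
proof (rule idealI)
  show "subgroup (nilradical R) (add_monoid R)"
  proof (rule add.subgroupI)
    have "\<zero> [^] (1::nat) = \<zero>" by simp
    then show "nilradical R \<noteq> {}" unfolding nilradical_def by blast
  next
    fix a assume "a \<in> nilradical R"
    then obtain n :: nat where a: "a \<in> carrier R" and n: "a [^] n = \<zero>"
      unfolding nilradical_def by blast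
    have "(\<ominus> a) [^] n = (\<ominus> \<one>) [^] n \<otimes> a [^] n"
      using a by (simp add: l_minus nat_pow_distrib[symmetric])
    then have "(\<ominus> a) [^] n = \<zero>" using a n by simp
    with a show "\<ominus> a \<in> nilradical R" unfolding nilradical_def by blast
  next
    fix a b assume "a \<in> nilradical R" "b \<in> nilradical R"
    then show "a \<oplus> b \<in> nilradical R"
      unfolding nilradical_def by (blast intro: nilpotent_add)
  qed (auto simp: nilradical_def)
next
  fix a x assume "a \<in> nilradical R" and x: "x \<in> carrier R"
  then obtain n :: nat where a: "a \<in> carrier R" and n: "a [^] n = \<zero>"
    unfolding nilradical_def by blast
  then have "(x \<otimes> a) [^] n = \<zero>" "(a \<otimes> x) [^] n = \<zero>"
    using x by (simp_all add: nat_pow_distrib)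
  with a x show "x \<otimes> a \<in> nilradical R" "a \<otimes> x \<in> nilradical R"
    unfolding nilradical_def by blast+
qed (rule ring_axioms)

lemma (in ring) regular_elems_mult_closed:
  assumes "u \<in> regular_elems R" "v \<in> regular_elems R"
  shows "u \<otimes> v \<in> regular_elems R"
proof -
  have u: "u \<in> carrier R" and v: "v \<in> carrier R"
    and u_cancel: "\<And>b. b \<in> carrier R \<Longrightarrow> u \<otimes> b = \<zero> \<Longrightarrow> b = \<zero>"
    and v_cancel: "\<And>b. b \<in> carrier R \<Longrightarrow> v \<otimes> b = \<zero> \<Longrightarrow> b = \<zero>"
    using assms unfolding regular_elems_def by blast+
  have "b = \<zero>" if b: "b \<in> carrier R" and "u \<otimes> v \<otimes> b = \<zero>" for b
  proof -
    have "u \<otimes> (v \<otimes> b) = \<zero>" using that u v by (simp add: m_assoc)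
    then show ?thesis using u_cancel v_cancel v b by simp
  qed
  with u v show ?thesis unfolding regular_elems_def by blast
qed

lemma (in ring) regular_elems_pow_closed:
  assumes "u \<in> regular_elems R"
  shows "u [^] (n::nat) \<in> regular_elems R"
proof (induction n)
  case 0
  then show ?case by (auto simp: regular_elems_def)
next
  case (Suc n)
  then show ?case using regular_elems_mult_closed[OF Suc assms] by simp
qed

lemma (in cring) regular_mult_nilradicalD:
  assumes u: "u \<in> regular_elems R" and c: "c \<in> carrier R"
    and "u \<otimes> c \<in> nilradical R"
  shows "c \<in> nilradical R"
proof -
  obtain n :: nat where "(u \<otimes> c) [^] n = \<zero>"
    using assms(3) unfolding nilradical_def by blast
  moreover have "u \<in> carrier R" using u unfolding regular_elems_def by blast
  ultimately have "u [^] n \<otimes> c [^] n = \<zero>"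
    using c by (simp add: nat_pow_distrib)
  then have "c [^] n = \<zero>"
    using regular_elems_pow_closed[OF u, of n] c unfolding regular_elems_def by blast
  with c show ?thesis unfolding nilradical_def by blast
qed

lemma (in ideal) carrier_Quot_eq_image: "carrier (R Quot I) = (+>) I ` carrier R"
  unfolding FactRing_def A_RCOSETS_def' by auto

lemma (in ideal) rcos_eq_zero_Quot_iff:
  "a \<in> carrier R \<Longrightarrow> I +> a = \<zero>\<^bsub>R Quot I\<^esub> \<longleftrightarrow> a \<in> I"
  using a_rcos_self a_rcos_const unfolding FactRing_def by force

lemma (in cring) regular_elems_Quot_nilradical:
  assumes u: "u \<in> regular_elems R"
  shows "nilradical R +> u \<in> regular_elems (R Quot nilradical R)"
proof -
  interpret N: ideal "nilradical R" R by (rule nilradical_ideal)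
  interpret h: ring_hom_ring R "R Quot nilradical R" "(+>) (nilradical R)"
    by (rule N.rcos_ring_hom_ring)
  have u_carr: "u \<in> carrier R" using u unfolding regular_elems_def by blast
  have "C = \<zero>\<^bsub>R Quot nilradical R\<^esub>"
    if C_carr: "C \<in> carrier (R Quot nilradical R)"
      and C_ann: "(nilradical R +> u) \<otimes>\<^bsub>R Quot nilradical R\<^esub> C = \<zero>\<^bsub>R Quot nilradical R\<^esub>" for C
  proof -
    obtain c where C: "C = nilradical R +> c" and c: "c \<in> carrier R"
      using C_carr unfolding N.carrier_Quot_eq_image by blast
    have "nilradical R +> (u \<otimes> c) = (nilradical R +> u) \<otimes>\<^bsub>R Quot nilradical R\<^esub> C"
      using h.hom_mult[OF u_carr c] C by simp
    also have "\<dots> = \<zero>\<^bsub>R Quot nilradical R\<^esub>" by (rule C_ann)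
    finally have "u \<otimes> c \<in> nilradical R"
      using N.rcos_eq_zero_Quot_iff[of "u \<otimes> c"] u_carr c by simp
    then have "c \<in> nilradical R" by (rule regular_mult_nilradicalD[OF u c])
    then show ?thesis using N.rcos_eq_zero_Quot_iff[OF c] C by simp
  qed
  moreover have "nilradical R +> u \<in> carrier (R Quot nilradical R)"
    using h.hom_closed[OF u_carr] .
  ultimately show ?thesis unfolding regular_elems_def by blast
qed

lemma (in ring) complemented_elem_zero: "complemented_elem R \<zero>"
  unfolding complemented_elem_def regular_elems_def by (intro bexI[of _ \<one>]) auto

lemma (in cring) complemented_elem_Quot_nilradical:
  assumes a: "a \<in> carrier R" and "complemented_elem R a"
  shows "complemented_elem (R Quot nilradical R) (nilradical R +> a)"
proof -
  interpret N: ideal "nilradical R" R by (rule nilradical_ideal)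
  interpret h: ring_hom_ring R "R Quot nilradical R" "(+>) (nilradical R)"
    by (rule N.rcos_ring_hom_ring)
  obtain b where b: "b \<in> carrier R" and ab: "a \<otimes> b = \<zero>" and reg: "a \<oplus> b \<in> regular_elems R"
    using assms(2) unfolding complemented_elem_def by blast
  have "(nilradical R +> a) \<otimes>\<^bsub>R Quot nilradical R\<^esub> (nilradical R +> b)
      = \<zero>\<^bsub>R Quot nilradical R\<^esub>"
    using h.hom_mult[OF a b] h.hom_zero ab by argo
  moreover have "(nilradical R +> a) \<oplus>\<^bsub>R Quot nilradical R\<^esub> (nilradical R +> b)
      \<in> regular_elems (R Quot nilradical R)"
    using h.hom_add[OF a b] regular_elems_Quot_nilradical[OF reg] by argo
  ultimately show ?thesis
    unfolding complemented_elem_def using h.hom_closed[OF b] by blast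
qed

theorem mainTheorem4:
  fixes R :: "('a, 'b) ring_scheme"
  assumes "cring R"
    and "semi_complemented R"
  shows "almost_complemented R"
proof -
  interpret cring R by fact
  interpret N: ideal "nilradical R" R by (rule nilradical_ideal)
  interpret Q: ring "R Quot nilradical R" by (rule N.quotient_is_ring)
  have "complemented_elem (R Quot nilradical R) X"
    if X_carr: "X \<in> carrier (R Quot nilradical R)" for X
  proof -
    obtain a where X: "X = nilradical R +>\<^bsub>R\<^esub> a" and a: "a \<in> carrier R"
      using X_carr unfolding N.carrier_Quot_eq_image by blast
    show ?thesis
    proof (cases "a \<in> nilradical R")
      case True
      then show ?thesis using N.rcos_eq_zero_Quot_iff[OF a] X Q.complemented_elem_zero by simp
    next
      case False
      with assms(2) a have "complemented_elem R a" unfolding semi_complemented_def by blast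
      with a X show ?thesis using complemented_elem_Quot_nilradical by blast
    qed
  qed
  then show ?thesis unfolding almost_complemented_def complemented_ring_def by blast
qed

end
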